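(* Let $m\ge 0$ and $k\ge 1$ be integers such that $f=2^{m+k+1}+2^k-1$ is prime, and put $a=2^{m+k}f$ and $b=2^m f$. Let $x,y$ be positive integers with $(x-b)(y-b)=b^2$ such that $p=x-1$, $q=y-1$, $r=xy-1$ are primes, $p\neq q$, and none of $p,q,r$ divides $a$ (in particular none equals $f$ or $2$). Then $apq$ and $ar$ are amicable numbers.
   Context: For a positive integer $N$, $\sigma(N)$ denotes the sum of all positive divisors of $N$. Positive integers $M,N$ are amicable if $\sigma(M)-M=N$ and $\sigma(N)-N=M$. *)

theory Defs
  imports "HOL-Computational_Algebra.Primes"
begin

definition sigma :: "nat \<Rightarrow> nat" where
  "sigma N = (\<Sum>d \<in> {d. d dvd N}. d)"

definition amicable :: "nat \<Rightarrow> nat \<Rightarrow> bool" where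
  "amicable M N \<longleftrightarrow> M > 0 \<and> N > 0 \<and>
     int (sigma M) - int M = int N \<and> int (sigma N) - int N = int M"

end

theory Submission
  imports Defs
begin

(* As f is an odd prime,
   sigma a = (2^(m+k+1) - 1) (f + 1) = 2^k (2b - 1). For the primes p = x - 1, q = y - 1 and
   r = xy - 1 (so r + 1 = (p + 1)(q + 1)) multiplicativity gives sigma(apq) = sigma(ar) = sigma(a) xy,
   so both amicability equations reduce to sigma(a) xy = a (pq + r), i.e. to
   (2b - 1) xy = b (2xy - x - y), i.e. to xy = b (x + y), which is (x - b)(y - b) = b^2. *)

lemma sigma_0 [simp]: "sigma 0 = 0"
  by (simp add: sigma_def)

lemma sigma_mult_coprime:
  fixes m n :: nat
  assumes "coprime m n"
  shows "sigma (m * n) = sigma m * sigma n"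
proof (cases "m = 0 \<or> n = 0")
  case True
  with assms show ?thesis by auto
next
  case False
  let ?D = "\<lambda>N :: nat. {d. d dvd N}"
  have divisors_mult: "?D (m * n) = (\<lambda>(d, e). d * e) ` (?D m \<times> ?D n)"
    by (auto elim: dvd_productE intro: mult_dvd_mono)
  have "inj_on (\<lambda>(d, e). d * e) (?D m \<times> ?D n)"
  proof (rule inj_onI, clarsimp)
    fix d e d' e' :: nat
    assume dvd: "d dvd m" "e dvd n" "d' dvd m" "e' dvd n" and eq: "d * e = d' * e'"
    have "coprime d e'" "coprime d' e"
      using assms dvd by (auto intro: coprime_imp_coprime dvd_trans)
    then have "d dvd d'" "d' dvd d"
      using eq by (metis coprime_dvd_mult_left_iff dvd_triv_left)+
    then have "d = d'" by (rule dvd_antisym)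
    moreover have "d > 0" using dvd False by (auto intro: Nat.gr0I)
    ultimately show "d = d' \<and> e = e'" using eq by simp
  qed
  then have "sigma (m * n) = (\<Sum>(d, e) \<in> ?D m \<times> ?D n. d * e)"
    unfolding sigma_def divisors_mult by (simp add: sum.reindex case_prod_unfold)
  also have "\<dots> = sigma m * sigma n"
    using False by (simp add: sigma_def sum_product sum.cartesian_product)
  finally show ?thesis .
qed

lemma sigma_prime_power:
  fixes p :: nat
  assumes "prime p"
  shows "sigma (p ^ e) = (\<Sum>i\<le>e. p ^ i)"
proof -
  have "{d. d dvd p ^ e} = (\<lambda>i. p ^ i) ` {..e}"
    using divides_primepow_nat[OF assms] by auto
  moreover have "inj_on (\<lambda>i. p ^ i) {..e}"
    using prime_gt_1_nat[OF assms] by (auto simp: inj_on_def power_inject_exp)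
  ultimately show ?thesis
    by (simp add: sigma_def sum.reindex)
qed

lemma sigma_prime:
  fixes p :: nat
  assumes "prime p"
  shows "sigma p = p + 1"
  using sigma_prime_power[OF assms, of 1] by simp

lemma sigma_two_power_mult_odd_prime:
  fixes f :: nat
  assumes "prime f" "odd f"
  shows "sigma (2 ^ n * f) = (2 ^ Suc n - 1) * (f + 1)"
proof -
  have "sigma (2 ^ n) = 2 ^ Suc n - 1"
    using sigma_prime_power[OF two_is_prime_nat, of n] sum_power2[of "Suc n"]
    by (simp add: atLeast0LessThan lessThan_Suc_atMost)
  moreover have "coprime (2 ^ n) f"
    using assms(2) by simp
  ultimately show ?thesis
    by (simp add: sigma_mult_coprime sigma_prime[OF assms(1)])
qed

lemma amicable_mult_primes:
  fixes a p q r :: nat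
  assumes "prime p" "prime q" "prime r" "p \<noteq> q"
    and "\<not> p dvd a" "\<not> q dvd a" "\<not> r dvd a"
    and "r + 1 = (p + 1) * (q + 1)"
    and "sigma a * (r + 1) = a * (p * q + r)"
  shows "amicable (a * p * q) (a * r)"
proof -
  have "a > 0" using assms(5) by (intro Nat.gr0I) simp
  have coprime: "coprime a p" "coprime (a * p) q" "coprime a r"
    using assms(1-7) primes_coprime prime_imp_coprime[THEN coprime_commute[THEN iffD1]]
    by auto
  have "sigma (a * p * q) = sigma a * (r + 1)"
    using coprime assms(1,2,8) by (simp add: sigma_mult_coprime sigma_prime algebra_simps)
  moreover have "sigma (a * r) = sigma a * (r + 1)"
    using coprime assms(3) by (simp add: sigma_mult_coprime sigma_prime)
  ultimately show ?thesis
    using assms(9) \<open>a > 0\<close> prime_gt_0_nat[OF assms(1)] prime_gt_0_nat[OF assms(2)]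
      prime_gt_0_nat[OF assms(3)]
    by (simp add: amicable_def algebra_simps)
qed

lemma hyperbola_identity:
  fixes b k x y :: int
  assumes "(x - b) * (y - b) = b ^ 2"
  shows "k * (2 * b - 1) * (x * y) = k * b * ((x - 1) * (y - 1) + (x * y - 1))"
  using assms by algebra

theorem mainTheorem6:
  fixes m k x y :: nat
  assumes "k \<ge> 1"
    and "prime (2 ^ (m + k + 1) + 2 ^ k - 1 :: nat)"
    and "x > 0" and "y > 0"
    and "(int x - int (2 ^ m * (2 ^ (m + k + 1) + 2 ^ k - 1))) *
         (int y - int (2 ^ m * (2 ^ (m + k + 1) + 2 ^ k - 1)))
         = (int (2 ^ m * (2 ^ (m + k + 1) + 2 ^ k - 1))) ^ 2"
    and "prime (x - 1)" and "prime (y - 1)" and "prime (x * y - 1)"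
    and "x - 1 \<noteq> y - 1"
    and "\<not> (x - 1) dvd 2 ^ (m + k) * (2 ^ (m + k + 1) + 2 ^ k - 1)"
    and "\<not> (y - 1) dvd 2 ^ (m + k) * (2 ^ (m + k + 1) + 2 ^ k - 1)"
    and "\<not> (x * y - 1) dvd 2 ^ (m + k) * (2 ^ (m + k + 1) + 2 ^ k - 1)"
  shows "amicable (2 ^ (m + k) * (2 ^ (m + k + 1) + 2 ^ k - 1) * (x - 1) * (y - 1))
                  (2 ^ (m + k) * (2 ^ (m + k + 1) + 2 ^ k - 1) * (x * y - 1))"
proof -
  define f :: nat where "f = 2 ^ (m + k + 1) + 2 ^ k - 1"
  define b :: nat where "b = 2 ^ m * f"
  define a :: nat where "a = 2 ^ (m + k) * f"
  have f_int: "int f = 2 * 2 ^ m * 2 ^ k + 2 ^ k - 1"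
    unfolding f_def by (subst of_nat_diff) (simp_all add: power_add add_increasing)
  have "odd f"
    using assms(1) by (simp add: f_def)
  then have "sigma a = (2 ^ Suc (m + k) - 1) * (f + 1)"
    using assms(2) by (simp add: a_def f_def sigma_two_power_mult_odd_prime)
  then have "int (sigma a) = (2 * 2 ^ m * 2 ^ k - 1) * (int f + 1)"
    by (simp only: of_nat_mult of_nat_add of_nat_1) (simp add: of_nat_diff power_add)
  also have "\<dots> = 2 ^ k * (2 * int b - 1)"
    by (simp add: b_def f_int algebra_simps)
  finally have sigma_a: "int (sigma a) = 2 ^ k * (2 * int b - 1)" .
  have a_int: "int a = 2 ^ k * int b"
    by (simp add: a_def b_def power_add)
  have hyperbola: "(int x - int b) * (int y - int b) = int b ^ 2"
    using assms(5) unfolding b_def f_def .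
  have "int (x - 1) = int x - 1" "int (y - 1) = int y - 1" "int (x * y - 1) = int x * int y - 1"
    using assms(3,4) by (simp_all add: of_nat_diff)
  then have "int (sigma a * (x * y - 1 + 1)) = int (a * ((x - 1) * (y - 1) + (x * y - 1)))"
    using hyperbola_identity[OF hyperbola, of "2 ^ k"]
    by (simp only: sigma_a a_int of_nat_mult of_nat_add of_nat_1) simp
  then have "sigma a * (x * y - 1 + 1) = a * ((x - 1) * (y - 1) + (x * y - 1))"
    by (rule of_nat_eq_iff[THEN iffD1])
  moreover have "x * y - 1 + 1 = (x - 1 + 1) * (y - 1 + 1)"
    using assms(3,4) by simp
  ultimately show ?thesis
    using amicable_mult_primes[OF assms(6-12)] unfolding a_def f_def by simp
qed

end
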